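(* Let $G$ be a finite irreducible ordered graph, and suppose that $G$ has at most one (up to order-isomorphism) irreducible induced ordered subgraph of order $3$, and at most one of order $4$. Then $G \in \mathcal{J}$.
   Context: Ordered graphs of order $n$ have vertex set $[n]$ with the natural order. A pair of vertices $u<v$ separates the edges of $G$ if every edge $ij$ ($i<j$) has $j\leqslant u$ or $v\leqslant i$; $G$ is irreducible if no pair separates its edges. For $n\in\mathbb{N}$: $J^{(n)}_1=K_n$; $J^{(n)}_2$ on $[n]$ with edge set $\{1n\}$ if $n\geqslant2$ (empty if $n=1$); $J^{(n)}_3$ on $[n]$ with edges $\{1i: 2\leqslant i\leqslant n\}$; $J^{(n)}_4$ on $[n]$ with edges $\{in: 1\leqslant i\leqslant n-1\}$; $L^{(n)}$ on $[n]$ with edges $\{i(i+1): 1\leqslant i\leqslant n-1\}$; $Q_1$ on $[4]$ with edges $\{13,24\}$; $Q_2$ on $[4]$ with edges $\{14,23\}$. $\mathcal{J}$ is the set of all ordered graphs $J^{(n)}_i$ ($i\in[4]$, $n\in\mathbb{N}$), $L^{(n)}$ ($n\in\mathbb{N}$), $Q_1$ and $Q_2$. *)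

theory Defs
  imports Main
begin

text \<open>An ordered graph of order n: vertex set {1..n} with the natural order;
  edges are stored as pairs (i,j) with i < j.\<close>
type_synonym ograph = "nat \<times> (nat \<times> nat) set"

definition ordered_graph :: "ograph \<Rightarrow> bool" where
  "ordered_graph G \<longleftrightarrow> 1 \<le> fst G \<and>
     snd G \<subseteq> {(i,j). 1 \<le> i \<and> i < j \<and> j \<le> fst G}"

definition separates :: "ograph \<Rightarrow> nat \<Rightarrow> nat \<Rightarrow> bool" where
  "separates G u v \<longleftrightarrow> u \<in> {1..fst G} \<and> v \<in> {1..fst G} \<and> u < v \<and>
     (\<forall>(i,j)\<in>snd G. j \<le> u \<or> v \<le> i)"

definition oirreducible :: "ograph \<Rightarrow> bool" where
  "oirreducible G \<longleftrightarrow> \<not> (\<exists>u v. separates G u v)"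

text \<open>Induced ordered subgraph on S, relabelled order-preservingly onto {1..card S}
  (this is the canonical representative of its order-isomorphism class).\<close>
definition induced :: "ograph \<Rightarrow> nat set \<Rightarrow> ograph" where
  "induced G S = (let s = sorted_list_of_set S in
     (card S, {(i,j). 1 \<le> i \<and> i < j \<and> j \<le> card S \<and> (s ! (i - 1), s ! (j - 1)) \<in> snd G}))"

definition J1 :: "nat \<Rightarrow> ograph" where
  "J1 n = (n, {(i,j). 1 \<le> i \<and> i < j \<and> j \<le> n})"
definition J2 :: "nat \<Rightarrow> ograph" where
  "J2 n = (n, if 2 \<le> n then {(1,n)} else {})"
definition J3 :: "nat \<Rightarrow> ograph" where
  "J3 n = (n, {(1,i) | i. 2 \<le> i \<and> i \<le> n})"
definition J4 :: "nat \<Rightarrow> ograph" where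
  "J4 n = (n, {(i,n) | i. 1 \<le> i \<and> i \<le> n - 1})"
definition Lg :: "nat \<Rightarrow> ograph" where
  "Lg n = (n, {(i,i+1) | i. 1 \<le> i \<and> i \<le> n - 1})"
definition Q1 :: ograph where "Q1 = (4, {(1,3),(2,4)})"
definition Q2 :: ograph where "Q2 = (4, {(1,4),(2,3)})"

definition calJ :: "ograph set" where
  "calJ = {G. \<exists>n\<ge>1. G = J1 n \<or> G = J2 n \<or> G = J3 n \<or> G = J4 n \<or> G = Lg n} \<union> {Q1, Q2}"

text \<open>Order-isomorphism classes of irreducible induced ordered subgraphs of order k.\<close>
definition irr_induced :: "ograph \<Rightarrow> nat \<Rightarrow> ograph set" where
  "irr_induced G k = {H. \<exists>S. S \<subseteq> {1..fst G} \<and> card S = k \<and> H = induced G S \<and> oirreducible H}"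

end

theory Submission
  imports Defs
begin

text \<open>
  An ordered graph is irreducible iff every cut between u and u + 1 is crossed by an edge; for a
  triple a < b < c this means that ac is an edge, or both ab and bc are. If all irreducible
  triples of G have the same edge pattern (e12, e13, e23), crossing edges propagate this pattern:
  without e13 every edge joins consecutive vertices (L); with all three, edges are closed under
  shortening and concatenation (K); with e12 but not e23 every edge starts at 1 (J3), and
  symmetrically (J4). In the remaining case, pattern {13}, every vertex has degree at most one,
  and the uniqueness of the irreducible 4-vertex type decides between a single long edge (J2),
  a long edge with one nested edge (Q2) and two crossing edges (Q1).
\<close>

lemma oirreducible_iff_cuts_crossed:
  "oirreducible H \<longleftrightarrow> (\<forall>u. 1 \<le> u \<longrightarrow> u < fst H \<longrightarrow> (\<exists>(i,j)\<in>snd H. i \<le> u \<and> u < j))"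
proof
  assume "oirreducible H"
  then have "\<not> separates H u (Suc u)" for u
    unfolding oirreducible_def by blast
  then show "\<forall>u. 1 \<le> u \<longrightarrow> u < fst H \<longrightarrow> (\<exists>(i,j)\<in>snd H. i \<le> u \<and> u < j)"
    unfolding separates_def by fastforce
next
  assume "\<forall>u. 1 \<le> u \<longrightarrow> u < fst H \<longrightarrow> (\<exists>(i,j)\<in>snd H. i \<le> u \<and> u < j)"
  then show "oirreducible H"
    unfolding oirreducible_def separates_def by fastforce
qed

lemma induced_set_sorted:
  assumes "sorted_wrt (<) xs"
  shows "induced G (set xs) =
    (length xs, {(i,j). 1 \<le> i \<and> i < j \<and> j \<le> length xs \<and> (xs ! (i - 1), xs ! (j - 1)) \<in> snd G})"
  using assms
  by (simp add: induced_def sorted_list_of_set.idem_if_sorted_distinct strict_sorted_iff distinct_card)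

lemma oirreducible_induced_iff:
  assumes "sorted_wrt (<) xs"
  shows "oirreducible (induced G (set xs)) \<longleftrightarrow>
    (\<forall>u < length xs. 0 < u \<longrightarrow> (\<exists>i < u. \<exists>j < length xs. u \<le> j \<and> (xs ! i, xs ! j) \<in> snd G))"
proof -
  let ?E = "snd G" and ?k = "length xs"
  have "(\<exists>(i,j) \<in> {(i,j). 1 \<le> i \<and> i < j \<and> j \<le> ?k \<and> (xs ! (i - 1), xs ! (j - 1)) \<in> ?E}. i \<le> u \<and> u < j)
    \<longleftrightarrow> (\<exists>i < u. \<exists>j < ?k. u \<le> j \<and> (xs ! i, xs ! j) \<in> ?E)" for u
  proof
    assume "\<exists>(i,j) \<in> {(i,j). 1 \<le> i \<and> i < j \<and> j \<le> ?k \<and> (xs ! (i - 1), xs ! (j - 1)) \<in> ?E}. i \<le> u \<and> u < j"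
    then obtain i j where "1 \<le> i" "i \<le> u" "u < j" "j \<le> ?k" "(xs ! (i - 1), xs ! (j - 1)) \<in> ?E"
      by auto
    then show "\<exists>i < u. \<exists>j < ?k. u \<le> j \<and> (xs ! i, xs ! j) \<in> ?E"
      by (intro exI[of _ "i - 1"] conjI exI[of _ "j - 1"]) auto
  next
    assume "\<exists>i < u. \<exists>j < ?k. u \<le> j \<and> (xs ! i, xs ! j) \<in> ?E"
    then obtain i j where "i < u" "u \<le> j" "j < ?k" "(xs ! i, xs ! j) \<in> ?E"
      by auto
    then show "\<exists>(i,j) \<in> {(i,j). 1 \<le> i \<and> i < j \<and> j \<le> ?k \<and> (xs ! (i - 1), xs ! (j - 1)) \<in> ?E}. i \<le> u \<and> u < j"
      by (intro bexI[of _ "(Suc i, Suc j)"]) auto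
  qed
  then show ?thesis
    unfolding oirreducible_iff_cuts_crossed induced_set_sorted[OF assms]
    by (auto simp: Suc_le_eq)
qed

lemma oirreducible_induced_triple:
  assumes "a < b" "b < c"
  shows "oirreducible (induced G {a,b,c}) \<longleftrightarrow>
    (a,c) \<in> snd G \<or> (a,b) \<in> snd G \<and> (b,c) \<in> snd G"
  using assms oirreducible_induced_iff[of "[a,b,c]" G]
  by (auto simp: eval_nat_numeral All_less_Suc Ex_less_Suc)

lemma oirreducible_induced_quadrupleI:
  assumes "a < b" "b < c" "c < d" "(a,d) \<in> snd G \<or> (a,c) \<in> snd G \<and> (b,d) \<in> snd G"
  shows "oirreducible (induced G {a,b,c,d})"
  using assms oirreducible_induced_iff[of "[a,b,c,d]" G]
  by (auto simp: eval_nat_numeral All_less_Suc Ex_less_Suc)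

lemma finite_irr_induced: "finite (irr_induced G k)"
proof (rule finite_subset)
  show "irr_induced G k \<subseteq> induced G ` Pow {1..fst G}"
    unfolding irr_induced_def by auto
qed simp

lemma irr_induced_edges_agree:
  assumes unique: "card (irr_induced G k) \<le> 1"
    and xs: "sorted_wrt (<) xs" "set xs \<subseteq> {1..fst G}" "length xs = k"
      "oirreducible (induced G (set xs))"
    and ys: "sorted_wrt (<) ys" "set ys \<subseteq> {1..fst G}" "length ys = k"
      "oirreducible (induced G (set ys))"
    and "i < j" "j < k"
  shows "(xs ! i, xs ! j) \<in> snd G \<longleftrightarrow> (ys ! i, ys ! j) \<in> snd G"
proof -
  have "induced G (set xs) \<in> irr_induced G k" "induced G (set ys) \<in> irr_induced G k"
    using xs ys unfolding irr_induced_def by (auto simp: strict_sorted_iff distinct_card)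
  then have "induced G (set xs) = induced G (set ys)"
    using unique finite_irr_induced by (metis One_nat_def card_le_Suc0_iff_eq)
  then have "(Suc i, Suc j) \<in> snd (induced G (set xs)) \<longleftrightarrow> (Suc i, Suc j) \<in> snd (induced G (set ys))"
    by simp
  then show ?thesis
    using xs ys \<open>i < j\<close> \<open>j < k\<close> by (simp add: induced_set_sorted)
qed

locale irreducible_ograph =
  fixes G :: ograph
  assumes ordered: "ordered_graph G" and irreducible: "oirreducible G"
begin

abbreviation n :: nat where "n \<equiv> fst G"
abbreviation E :: "nat \<Rightarrow> nat \<Rightarrow> bool" where "E i j \<equiv> (i,j) \<in> snd G"

lemma edge_range: "E i j \<Longrightarrow> 1 \<le> i \<and> i < j \<and> j \<le> n"
  using ordered unfolding ordered_graph_def by auto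

lemma n_pos: "1 \<le> n"
  using ordered unfolding ordered_graph_def by simp

lemma cut_crossed:
  assumes "1 \<le> u" "u < n"
  obtains i j where "E i j" "i \<le> u" "u < j"
  using irreducible assms unfolding oirreducible_iff_cuts_crossed by blast

lemma ograph_eqI:
  assumes "fst H = n" and "\<And>i j. (i,j) \<in> snd H \<Longrightarrow> 1 \<le> i \<and> i < j \<and> j \<le> n"
    and "\<And>i j. 1 \<le> i \<Longrightarrow> i < j \<Longrightarrow> j \<le> n \<Longrightarrow> E i j \<longleftrightarrow> (i,j) \<in> snd H"
  shows "G = H"
proof -
  have "(i,j) \<in> snd G \<longleftrightarrow> (i,j) \<in> snd H" for i j
    using assms(2,3)[of i j] edge_range[of i j] by blast
  then have "snd G = snd H"
    by auto
  with assms(1) show ?thesis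
    by (simp add: prod_eq_iff)
qed

lemma ograph_eqI_4:
  assumes "n = 4" and "fst H = 4" and "snd H \<subseteq> {(i,j). 1 \<le> i \<and> i < j \<and> j \<le> 4}"
    and "E 1 2 \<longleftrightarrow> (1,2) \<in> snd H" "E 1 3 \<longleftrightarrow> (1,3) \<in> snd H" "E 1 4 \<longleftrightarrow> (1,4) \<in> snd H"
    and "E 2 3 \<longleftrightarrow> (2,3) \<in> snd H" "E 2 4 \<longleftrightarrow> (2,4) \<in> snd H" "E 3 4 \<longleftrightarrow> (3,4) \<in> snd H"
  shows "G = H"
proof (rule ograph_eqI)
  fix i j :: nat
  assume "1 \<le> i" "i < j" "j \<le> n"
  with \<open>n = 4\<close> have "(i,j) \<in> {(1,2),(1,3),(1,4),(2,3),(2,4),(3,4)}"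
    by auto
  with assms(4-) show "E i j \<longleftrightarrow> (i,j) \<in> snd H"
    by auto
qed (use assms(1-3) in auto)

lemma crossing_triple:
  assumes "3 \<le> n"
  obtains a b c where "1 \<le> a" "a < b" "b < c" "c \<le> n" "E a c \<or> E a b \<and> E b c"
proof -
  obtain i j where "E i j" "i \<le> 1" "1 < j"
    using assms by (auto intro: cut_crossed[of 1])
  then have first: "E 1 j"
    using edge_range by (metis le_antisym)
  show ?thesis
  proof (cases "j = 2")
    case True
    obtain p q where pq: "E p q" "p \<le> 2" "2 < q"
      using assms by (auto intro: cut_crossed[of 2])
    then have "p = 1 \<or> p = 2"
      using edge_range[OF pq(1)] by auto
    then show ?thesis
      using that[of 1 2 q] pq first True edge_range[OF pq(1)] by auto
  next
    case False
    then show ?thesis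
      using that[of 1 2 j] first edge_range[OF first] by auto
  qed
qed

lemma triples_agree:
  assumes "card (irr_induced G 3) \<le> 1"
    and "1 \<le> a" "a < b" "b < c" "c \<le> n" "E a c \<or> E a b \<and> E b c"
    and "1 \<le> a'" "a' < b'" "b' < c'" "c' \<le> n" "E a' c' \<or> E a' b' \<and> E b' c'"
  shows "(E a b \<longleftrightarrow> E a' b') \<and> (E a c \<longleftrightarrow> E a' c') \<and> (E b c \<longleftrightarrow> E b' c')"
proof -
  have "E ([a,b,c] ! i) ([a,b,c] ! j) \<longleftrightarrow> E ([a',b',c'] ! i) ([a',b',c'] ! j)"
    if "i < j" "j < 3" for i j
    using assms that
    by (intro irr_induced_edges_agree[where k = 3]) (auto simp: oirreducible_induced_triple)
  from this[of 0 1] this[of 0 2] this[of 1 2] show ?thesis by simp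
qed

lemma quadruples_agree:
  assumes "card (irr_induced G 4) \<le> 1"
    and "1 \<le> a" "a < b" "b < c" "c < d" "d \<le> n" "E a d \<or> E a c \<and> E b d"
    and "1 \<le> a'" "a' < b'" "b' < c'" "c' < d'" "d' \<le> n" "E a' d' \<or> E a' c' \<and> E b' d'"
  shows "(E a b \<longleftrightarrow> E a' b') \<and> (E a c \<longleftrightarrow> E a' c') \<and> (E a d \<longleftrightarrow> E a' d') \<and>
    (E b c \<longleftrightarrow> E b' c') \<and> (E b d \<longleftrightarrow> E b' d') \<and> (E c d \<longleftrightarrow> E c' d')"
proof -
  have "E ([a,b,c,d] ! i) ([a,b,c,d] ! j) \<longleftrightarrow> E ([a',b',c',d'] ! i) ([a',b',c',d'] ! j)"
    if "i < j" "j < 4" for i j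
    using assms that
    by (intro irr_induced_edges_agree[where k = 4]) (auto intro: oirreducible_induced_quadrupleI)
  from this[of 0 1] this[of 0 2] this[of 0 3] this[of 1 2] this[of 1 3] this[of 2 3]
  show ?thesis by simp
qed

end

locale irreducible_matching = irreducible_ograph +
  assumes right_unique: "E a b \<Longrightarrow> E a c \<Longrightarrow> b = c"
    and left_unique: "E a c \<Longrightarrow> E b c \<Longrightarrow> a = b"
    and no_path: "E a b \<Longrightarrow> \<not> E b c"
begin

lemma order_4_if_nested:
  assumes unique4: "card (irr_induced G 4) \<le> 1"
    and long: "E 1 n" and inner: "E a b" "1 < a" "b < n"
  shows "n = 4"
proof (rule ccontr)
  assume "n \<noteq> 4"
  with inner edge_range[OF inner(1)] have "4 < n"
    by linarith
  have "E 2 3"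
    using quadruples_agree[OF unique4, of 1 a b n 1 2 3 n] inner edge_range[OF inner(1)] long \<open>4 < n\<close>
    by auto
  moreover have "E 2 4"
    using quadruples_agree[OF unique4, of 1 a b n 1 2 4 n] inner edge_range[OF inner(1)] long \<open>4 < n\<close>
    by auto
  ultimately show False
    using right_unique by force
qed

lemma eq_J2_or_Q2:
  assumes unique4: "card (irr_induced G 4) \<le> 1" and long: "E 1 n"
  shows "G = J2 n \<or> G = Q2"
proof (cases "snd G = {(1,n)}")
  case True
  moreover have "2 \<le> n"
    using edge_range[OF long] by simp
  ultimately have "G = J2 n"
    by (simp add: J2_def prod_eq_iff)
  then show ?thesis ..
next
  case False
  with long obtain a b where ab: "E a b" "(a,b) \<noteq> (1,n)"
    by auto
  have "a \<noteq> 1" "b \<noteq> n"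
    using ab right_unique[OF long] left_unique[OF _ long] by auto
  with edge_range[OF ab(1)] have "1 < a" "a < b" "b < n"
    by auto
  moreover from this have "n = 4"
    using order_4_if_nested[OF unique4 long ab(1)] by simp
  ultimately have "a = 2" "b = 3"
    by auto
  with ab long \<open>n = 4\<close> have "E 1 4" "E 2 3"
    by auto
  moreover have "\<not> E 1 2" "\<not> E 1 3"
    using right_unique[OF \<open>E 1 4\<close>] by force+
  moreover have "\<not> E 2 4" "\<not> E 3 4"
    using left_unique[OF _ \<open>E 1 4\<close>] by force+
  ultimately have "G = Q2"
    using \<open>n = 4\<close> by (intro ograph_eqI_4) (auto simp: Q2_def)
  then show ?thesis ..
qed

lemma short_edges_if_crossing:
  assumes unique4: "card (irr_induced G 4) \<le> 1"
    and crossing: "E a c" "E b d" "a < b" "b < c" "c < d"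
    and edge: "E x y"
  shows "y \<le> x + 2"
proof (rule ccontr)
  assume "\<not> y \<le> x + 2"
  then have "E x y \<longleftrightarrow> E a d"
    using quadruples_agree[OF unique4, of x "x + 1" "x + 2" y a b c d]
      edge edge_range[OF edge] edge_range[OF crossing(1)] edge_range[OF crossing(2)] crossing
    by auto
  moreover have "\<not> E a d"
    using right_unique[OF crossing(1)] \<open>c < d\<close> by force
  ultimately show False
    using edge by simp
qed

lemma eq_Q1:
  assumes unique4: "card (irr_induced G 4) \<le> 1" and first: "E 1 j" and "j < n"
  shows "G = Q1"
proof -
  have "1 \<le> j"
    using edge_range[OF first] by simp
  then obtain p q where pq: "E p q" "p \<le> j" "j < q"
    using \<open>j < n\<close> by (rule cut_crossed)
  have "p \<noteq> 1"
    using right_unique[OF first] pq by force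
  moreover have "p \<noteq> j"
    using no_path first pq(1) by blast
  ultimately have "1 < p" "p < j"
    using edge_range[OF pq(1)] pq(2) by auto
  note short = short_edges_if_crossing[OF unique4 first pq(1) \<open>1 < p\<close> \<open>p < j\<close> \<open>j < q\<close>]
  have "j = 3" "p = 2" "q = 4"
    using short[OF first] short[OF pq(1)] \<open>1 < p\<close> \<open>p < j\<close> \<open>j < q\<close> by auto
  with first pq(1) have "E 1 3" "E 2 4"
    by auto
  have "n = 4"
  proof (rule ccontr)
    assume "n \<noteq> 4"
    with \<open>q = 4\<close> edge_range[OF pq(1)] have "4 < n"
      by auto
    then obtain p' q' where pq': "E p' q'" "p' \<le> 4" "4 < q'"
      by (auto intro: cut_crossed[of 4])
    with short[OF pq'(1)] have "p' = 3 \<or> p' = 4"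
      by auto
    then show False
      using no_path[OF \<open>E 1 3\<close>] no_path[OF \<open>E 2 4\<close>] pq'(1) by auto
  qed
  moreover have "\<not> E 1 2" "\<not> E 1 4"
    using right_unique[OF \<open>E 1 3\<close>] by force+
  moreover have "\<not> E 2 3" "\<not> E 3 4"
    using left_unique[OF _ \<open>E 1 3\<close>] left_unique[OF _ \<open>E 2 4\<close>] by force+
  ultimately show "G = Q1"
    using \<open>E 1 3\<close> \<open>E 2 4\<close> by (intro ograph_eqI_4) (auto simp: Q1_def)
qed

lemma in_calJ:
  assumes "card (irr_induced G 4) \<le> 1" and "1 < n"
  shows "G \<in> calJ"
proof -
  obtain i j where "E i j" "i \<le> 1" "1 < j"
    using \<open>1 < n\<close> by (auto intro: cut_crossed[of 1])
  then have first: "E 1 j"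
    using edge_range by (metis le_antisym)
  show ?thesis
  proof (cases "j = n")
    case True
    with first have "G = J2 n \<or> G = Q2"
      using eq_J2_or_Q2 assms(1) by simp
    then show ?thesis
      unfolding calJ_def using n_pos by blast
  next
    case False
    with edge_range[OF first] have "G = Q1"
      using eq_Q1 assms(1) first by simp
    then show ?thesis
      unfolding calJ_def by blast
  qed
qed

end

locale uniform_triples = irreducible_ograph +
  fixes e12 e13 e23 :: bool
  assumes triple_type: "1 \<le> a \<Longrightarrow> a < b \<Longrightarrow> b < c \<Longrightarrow> c \<le> n \<Longrightarrow> E a c \<or> E a b \<and> E b c \<Longrightarrow>
    (E a b \<longleftrightarrow> e12) \<and> (E a c \<longleftrightarrow> e13) \<and> (E b c \<longleftrightarrow> e23)"

context uniform_triples
begin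

lemma inner_edges:
  assumes "E a c" "a < b" "b < c"
  shows "(E a b \<longleftrightarrow> e12) \<and> (E b c \<longleftrightarrow> e23)"
  using triple_type[of a b c] assms edge_range[OF assms(1)] by auto

lemma path_edges:
  assumes "E a b" "E b c"
  shows "e12 \<and> e23 \<and> (E a c \<longleftrightarrow> e13)"
  using triple_type[of a b c] assms edge_range[OF assms(1)] edge_range[OF assms(2)] by auto

lemma eq_Lg:
  assumes "\<not> e13"
  shows "G = Lg n"
proof -
  have short: "j = Suc i" if "E i j" for i j
  proof (rule ccontr)
    assume "j \<noteq> Suc i"
    then show False
      using triple_type[of i "Suc i" j] that edge_range[OF that] assms by auto
  qed
  have consecutive: "E i (Suc i)" if cut: "1 \<le> i" "i < n" for i
  proof -
    obtain p q where "E p q" "p \<le> i" "i < q"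
      by (rule cut_crossed[OF cut])
    with short show ?thesis
      by (metis le_antisym less_Suc_eq_le)
  qed
  show ?thesis
    by (rule ograph_eqI) (auto simp: Lg_def dest: short intro: consecutive)
qed

lemma eq_J1:
  assumes e12 e13 e23
  shows "G = J1 n"
proof -
  have consecutive: "E u (Suc u)" if cut: "1 \<le> u" "u < n" for u
  proof -
    obtain p q where pq: "E p q" "p \<le> u" "u < q"
      by (rule cut_crossed[OF cut])
    have "E u q"
      using pq assms by (cases "p = u") (auto dest: inner_edges[where b = u])
    then show ?thesis
      using pq(3) assms by (cases "q = Suc u") (auto dest: inner_edges[where b = "Suc u"])
  qed
  have complete: "E a c" if "1 \<le> a" "Suc a \<le> c" "c \<le> n" for a c
    using that(2,3)
  proof (induction c rule: dec_induct)
    case base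
    then show ?case using consecutive that(1) by simp
  next
    case (step m)
    then show ?case using path_edges[of a m "Suc m"] consecutive[of m] assms that(1) by simp
  qed
  show ?thesis
    by (rule ograph_eqI) (auto simp: J1_def intro: complete)
qed

lemma eq_J3:
  assumes e12 "\<not> e23"
  shows "G = J3 n"
proof -
  have from_first: "a = 1" if edge: "E a c" for a c
  proof (rule ccontr)
    assume "a \<noteq> 1"
    then have "1 \<le> a - 1" "a - 1 < n"
      using edge_range[OF edge] by auto
    then obtain p q where pq: "E p q" "p \<le> a - 1" "a - 1 < q"
      by (rule cut_crossed)
    then have "E p a"
      using inner_edges[OF pq(1), of a] assms \<open>1 \<le> a - 1\<close> by (cases "a = q") auto
    then show False
      using path_edges edge assms by blast
  qed
  have to_all: "E 1 k" if "1 < k" "k \<le> n" for k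
  proof -
    have "1 \<le> k - 1" "k - 1 < n"
      using that by auto
    then obtain p q where pq: "E p q" "p \<le> k - 1" "k - 1 < q"
      by (rule cut_crossed)
    then show ?thesis
      using from_first[OF pq(1)] assms that by (cases "k = q") (auto dest: inner_edges[where b = k])
  qed
  show ?thesis
    using to_all by (intro ograph_eqI) (auto simp: J3_def dest: from_first)
qed

lemma eq_J4:
  assumes "\<not> e12" e23
  shows "G = J4 n"
proof -
  have to_last: "c = n" if edge: "E a c" for a c
  proof (rule ccontr)
    assume "c \<noteq> n"
    then have "1 \<le> c" "c < n"
      using edge_range[OF edge] by auto
    then obtain p q where pq: "E p q" "p \<le> c" "c < q"
      by (rule cut_crossed)
    then have "E c q"
      using assms by (cases "p = c") (auto dest: inner_edges[where b = c])
    then show False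
      using path_edges edge assms by blast
  qed
  have from_all: "E k n" if cut: "1 \<le> k" "k < n" for k
  proof -
    obtain p q where pq: "E p q" "p \<le> k" "k < q"
      by (rule cut_crossed[OF cut])
    then show ?thesis
      using to_last[OF pq(1)] assms by (cases "p = k") (auto dest: inner_edges[where b = k])
  qed
  show ?thesis
    using from_all by (intro ograph_eqI) (auto simp: J4_def dest: to_last)
qed

lemma irreducible_matching:
  assumes "\<not> e12" "\<not> e23"
  shows "irreducible_matching G"
proof
  fix a b c
  show "b = c" if "E a b" "E a c"
  proof (rule ccontr)
    assume "b \<noteq> c"
    then consider "b < c" | "c < b"
      by linarith
    then show False
    proof cases
      case 1
      with inner_edges[OF that(2) _ 1] that edge_range[OF that(1)] assms show False
        by simp
    next
      case 2
      with inner_edges[OF that(1) _ 2] that edge_range[OF that(2)] assms show False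
        by simp
    qed
  qed
  show "a = b" if "E a c" "E b c"
  proof (rule ccontr)
    assume "a \<noteq> b"
    then consider "a < b" | "b < a"
      by linarith
    then show False
    proof cases
      case 1
      with inner_edges[OF that(1) 1] that edge_range[OF that(2)] assms show False
        by simp
    next
      case 2
      with inner_edges[OF that(2) 2] that edge_range[OF that(1)] assms show False
        by simp
    qed
  qed
  show "\<not> E b c" if "E a b"
    using that assms path_edges by blast
qed

lemma in_calJ:
  assumes "card (irr_induced G 4) \<le> 1" and "1 < n"
  shows "G \<in> calJ"
proof -
  have "G = Lg n \<or> G = J1 n \<or> G = J3 n \<or> G = J4 n \<or> G \<in> calJ"
    using eq_Lg eq_J1 eq_J3 eq_J4 irreducible_matching.in_calJ[OF irreducible_matching assms]
    by blast
  then show ?thesis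
    unfolding calJ_def using n_pos by blast
qed

end

theorem lemma18:
  assumes "ordered_graph G"
    and "oirreducible G"
    and "card (irr_induced G 3) \<le> 1"
    and "card (irr_induced G 4) \<le> 1"
  shows "G \<in> calJ"
proof -
  interpret irreducible_ograph G
    using assms(1,2) by unfold_locales
  show ?thesis
  proof (cases "3 \<le> n")
    case True
    then obtain a b c where abc: "1 \<le> a" "a < b" "b < c" "c \<le> n" "E a c \<or> E a b \<and> E b c"
      by (rule crossing_triple)
    interpret uniform_triples G "E a b" "E a c" "E b c"
      by unfold_locales (use triples_agree[OF assms(3) _ _ _ _ _ abc] in blast)
    show ?thesis
      using in_calJ assms(4) True by simp
  next
    case False
    \<comment> \<open>Without triples the pattern of the complete graph holds vacuously.\<close>
    interpret uniform_triples G True True True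
      by unfold_locales (use False in linarith)
    show ?thesis
      using eq_J1 n_pos unfolding calJ_def by blast
  qed
qed

end
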